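(* Let $N\ge2$, $\alpha\in(0,1)$, $\beta\in(\alpha,1)$, let $\Omega\subset\mathbb{R}^{N-1}$ be open and let $u,v\in C^{1,\beta}_{loc}(\Omega)\cap C(\mathbb{R}^{N-1})$. Set $w=u-v$. Then for every $x\in\Omega$, $$H(u)(x)-H(v)(x)=PV\int_{\mathbb{R}^{N-1}}\frac{w(x)-w(y)}{|x-y|^{N+\alpha}}\,\tilde q_{u,v}(x,y)\,dy,$$ where $\tilde q_{u,v}(x,y):=-2\int_0^1F'\big(p_v(x,y)+\rho\,p_{u-v}(x,y)\big)\,d\rho$. In particular, if $H(u)(x)-H(v)(x)\ge0$ for every $x\in\Omega$ and $u\ge v$ on $\mathbb{R}^{N-1}\setminus\Omega$, then $u-v$ cannot attain its global minimum (over $\mathbb{R}^{N-1}$) at a point of $\Omega$ unless $u-v$ is constant on $\mathbb{R}^{N-1}$.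
   Context: For a function $f:\mathbb{R}^{N-1}\to\mathbb{R}$ and $x\ne y$, set $p_f(x,y)=\frac{f(y)-f(x)}{|x-y|}$, and let $F(p)=\int_p^{+\infty}(1+\tau^2)^{-(N+\alpha)/2}\,d\tau$ (so $F'(p)=-(1+p^2)^{-(N+\alpha)/2}<0$). For $f$ continuous on $\mathbb{R}^{N-1}$ and $C^{1,\beta}$ near $x$, the nonlocal mean curvature of the graph of $f$ at $x$ is $$H(f)(x)=PV\int_{\mathbb{R}^{N-1}}\frac{F(p_f(x,y))-F(-p_f(x,y))}{|x-y|^{N-1+\alpha}}\,dy=\lim_{\varepsilon\to0}\int_{\mathbb{R}^{N-1}\setminus B_\varepsilon(x)}\frac{F(p_f(x,y))-F(-p_f(x,y))}{|x-y|^{N-1+\alpha}}\,dy,$$ which equals the nonlocal mean curvature $PV\int_{\mathbb{R}^N}\tau_{E_f}(z)|z-(x,f(x))|^{-N-\alpha}dz$ of the boundary of the subgraph $E_f=\{(y,t):t<f(y)\}$ at $(x,f(x))$, with $\tau_E=1_{\mathbb{R}^N\setminus E}-1_E$. *)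

theory Defs
  imports "HOL-Analysis.Analysis"
begin

text \<open>The space R^(N-1) is modelled by a Euclidean space type 'a with DIM('a) = N - 1.\<close>

definition Fnl :: "nat \<Rightarrow> real \<Rightarrow> real \<Rightarrow> real" where
  "Fnl N \<alpha> p = integral {p..} (\<lambda>\<tau>. (1 + \<tau>\<^sup>2) powr (- (real N + \<alpha>) / 2))"

definition Fnl' :: "nat \<Rightarrow> real \<Rightarrow> real \<Rightarrow> real" where
  "Fnl' N \<alpha> p = - ((1 + p\<^sup>2) powr (- (real N + \<alpha>) / 2))"

definition pquot :: "('a::euclidean_space \<Rightarrow> real) \<Rightarrow> 'a \<Rightarrow> 'a \<Rightarrow> real" where
  "pquot f x y = (f y - f x) / norm (x - y)"

text \<open>Nonlocal mean curvature of the graph of f at x, as a principal value.\<close>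
definition NMC :: "nat \<Rightarrow> real \<Rightarrow> ('a::euclidean_space \<Rightarrow> real) \<Rightarrow> 'a \<Rightarrow> real" where
  "NMC N \<alpha> f x = Lim (at_right 0)
     (\<lambda>\<epsilon>. LINT y : - ball x \<epsilon> | lborel.
        (Fnl N \<alpha> (pquot f x y) - Fnl N \<alpha> (- pquot f x y)) / norm (x - y) powr (real N - 1 + \<alpha>))"

definition qtilde :: "nat \<Rightarrow> real \<Rightarrow> ('a::euclidean_space \<Rightarrow> real) \<Rightarrow> ('a \<Rightarrow> real) \<Rightarrow> 'a \<Rightarrow> 'a \<Rightarrow> real" where
  "qtilde N \<alpha> u v x y =
     - 2 * integral {0..1} (\<lambda>\<rho>. Fnl' N \<alpha> (pquot v x y + \<rho> * pquot (\<lambda>z. u z - v z) x y))"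

definition C1beta_loc :: "real \<Rightarrow> 'a::euclidean_space set \<Rightarrow> ('a \<Rightarrow> real) \<Rightarrow> bool" where
  "C1beta_loc \<beta> \<Omega> f \<longleftrightarrow> (\<exists>g :: 'a \<Rightarrow> 'a.
      (\<forall>x\<in>\<Omega>. (f has_derivative (\<lambda>h. g x \<bullet> h)) (at x)) \<and>
      (\<forall>K. compact K \<and> K \<subseteq> \<Omega> \<longrightarrow>
         (\<exists>C. \<forall>x\<in>K. \<forall>y\<in>K. norm (g x - g y) \<le> C * dist x y powr \<beta>)))"

end

theory Submission
  imports Defs "HOL-Probability.Sinc_Integral"
begin

text \<open>Writing F(p) - F(-p) as the integral of F' along the segment from p_v(x,y) to p_u(x,y)
  turns the difference of the two curvature integrands into (w(x) - w(y)) |x - y|^(-N-\<alpha>) times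
  the positive weight q_{u,v}(x,y), so the identity holds as soon as both principal values exist.
  They do: near x the integrand differs from that of the tangent hyperplane, which is odd about x
  and so integrates to zero outside every ball around x, by O(|x - y|^(\<beta>-\<alpha>-(N-1))), an
  integrable singularity, while far from x it is O(|x - y|^(-(N-1+\<alpha>))). At a global minimum x0
  of w the new integrand is nonpositive everywhere and negative near any point where w exceeds
  w(x0), so the principal value at x0 would be negative unless w is constant.\<close>

section \<open>The kernel F\<close>

definition Fnl_density :: "nat \<Rightarrow> real \<Rightarrow> real \<Rightarrow> real" where
  "Fnl_density N \<alpha> t = (1 + t\<^sup>2) powr (- (real N + \<alpha>) / 2)"

lemma one_plus_power2_neq_0 [simp]: "1 + (t::real)\<^sup>2 \<noteq> 0"
  using zero_le_power2[of t] by linarith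

lemma Fnl_density_pos: "0 < Fnl_density N \<alpha> t"
  unfolding Fnl_density_def by simp

lemma Fnl_density_minus [simp]: "Fnl_density N \<alpha> (- t) = Fnl_density N \<alpha> t"
  unfolding Fnl_density_def by simp

lemma Fnl_density_le_one:
  assumes "0 \<le> real N + \<alpha>"
  shows "Fnl_density N \<alpha> t \<le> 1"
proof -
  have "(1 + t\<^sup>2) powr (- (real N + \<alpha>) / 2) \<le> (1 + t\<^sup>2) powr 0"
    using assms by (intro powr_mono) auto
  then show ?thesis unfolding Fnl_density_def by (simp add: add_pos_nonneg)
qed

lemma Fnl_density_le_inverse:
  assumes "2 \<le> real N + \<alpha>"
  shows "Fnl_density N \<alpha> t \<le> inverse (1 + t\<^sup>2)"
proof -
  have "(1 + t\<^sup>2) powr (- (real N + \<alpha>) / 2) \<le> (1 + t\<^sup>2) powr (-1)"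
    using assms by (intro powr_mono) auto
  then show ?thesis unfolding Fnl_density_def by (simp add: powr_minus add_pos_nonneg)
qed

lemma continuous_on_Fnl_density: "continuous_on S (Fnl_density N \<alpha>)"
  unfolding Fnl_density_def by (intro continuous_intros) (simp add: add_pos_nonneg)

lemma borel_measurable_Fnl_density [measurable]: "Fnl_density N \<alpha> \<in> borel_measurable borel"
  by (rule borel_measurable_continuous_onI) (rule continuous_on_Fnl_density)

lemma integrable_Fnl_density:
  assumes "2 \<le> real N + \<alpha>"
  shows "integrable lborel (Fnl_density N \<alpha>)"
proof (rule Bochner_Integration.integrable_bound)
  show "integrable lborel (\<lambda>t::real. inverse (1 + t\<^sup>2))"
    using integrable_inverse_1_plus_square by (simp add: set_integrable_def)
  show "AE t in lborel. norm (Fnl_density N \<alpha> t) \<le> norm (inverse (1 + t\<^sup>2))"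
    using Fnl_density_le_inverse[OF assms] Fnl_density_pos
    by (intro AE_I2) (simp add: less_imp_le add_pos_nonneg)
qed simp

lemma Fnl_density_integrable_on:
  assumes "2 \<le> real N + \<alpha>" "S \<in> sets borel"
  shows "Fnl_density N \<alpha> integrable_on S"
proof -
  have "set_integrable lborel S (Fnl_density N \<alpha>)"
    unfolding set_integrable_def
    using integrable_mult_indicator[OF _ integrable_Fnl_density[OF assms(1)], of S] assms(2) by simp
  then show ?thesis by (rule set_borel_integral_eq_integral(1))
qed

lemma Fnl'_eq: "Fnl' N \<alpha> p = - Fnl_density N \<alpha> p"
  unfolding Fnl'_def Fnl_density_def by simp

lemma Fnl_eq_integral: "Fnl N \<alpha> p = integral {p..} (Fnl_density N \<alpha>)"
  unfolding Fnl_def Fnl_density_def by simp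

lemma Fnl_split:
  assumes "2 \<le> real N + \<alpha>" "p \<le> q"
  shows "Fnl N \<alpha> p = integral {p..q} (Fnl_density N \<alpha>) + Fnl N \<alpha> q"
proof -
  have "{p..} = {p..q} \<union> {q..}" "{p..q} \<inter> {q..} = {q}" using assms(2) by auto
  then show ?thesis unfolding Fnl_eq_integral
    by (metis integral_Un Fnl_density_integrable_on[OF assms(1)] atLeastAtMost_borel atLeast_borel
        negligible_sing)
qed

lemma Fnl_nonneg: "2 \<le> real N + \<alpha> \<Longrightarrow> 0 \<le> Fnl N \<alpha> p"
  unfolding Fnl_eq_integral
  by (rule integral_nonneg) (auto intro!: Fnl_density_integrable_on less_imp_le[OF Fnl_density_pos])

lemma Fnl_le_integral_UNIV: "2 \<le> real N + \<alpha> \<Longrightarrow> Fnl N \<alpha> p \<le> integral UNIV (Fnl_density N \<alpha>)"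
  unfolding Fnl_eq_integral
  by (rule integral_subset_le) (auto intro!: Fnl_density_integrable_on less_imp_le[OF Fnl_density_pos])

lemma has_real_derivative_Fnl:
  assumes "2 \<le> real N + \<alpha>"
  shows "(Fnl N \<alpha> has_real_derivative Fnl' N \<alpha> p) (at p)"
proof -
  have "((\<lambda>q. integral {p - 1..q} (Fnl_density N \<alpha>)) has_real_derivative Fnl_density N \<alpha> p)
      (at p within {p - 1..p + 1})"
    by (rule integral_has_real_derivative) (auto simp: continuous_on_Fnl_density)
  then have "((\<lambda>q. integral {p - 1..q} (Fnl_density N \<alpha>)) has_real_derivative Fnl_density N \<alpha> p) (at p)"
    by (simp add: at_within_Icc_at)
  from DERIV_diff[OF DERIV_const this]
  have "((\<lambda>q. Fnl N \<alpha> (p - 1) - integral {p - 1..q} (Fnl_density N \<alpha>)) has_real_derivative Fnl' N \<alpha> p) (at p)"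
    by (simp add: Fnl'_eq)
  then show ?thesis
  proof (rule has_field_derivative_transform_within_open[of _ _ _ "{p - 1<..}"])
    fix q assume "q \<in> {p - 1<..}"
    then show "Fnl N \<alpha> (p - 1) - integral {p - 1..q} (Fnl_density N \<alpha>) = Fnl N \<alpha> q"
      using Fnl_split[OF assms, of "p - 1" q] by simp
  qed auto
qed

definition Fnl_odd :: "nat \<Rightarrow> real \<Rightarrow> real \<Rightarrow> real" where
  "Fnl_odd N \<alpha> p = Fnl N \<alpha> p - Fnl N \<alpha> (- p)"

lemma Fnl_odd_minus: "Fnl_odd N \<alpha> (- p) = - Fnl_odd N \<alpha> p"
  unfolding Fnl_odd_def by simp

lemma has_real_derivative_Fnl_odd:
  assumes "2 \<le> real N + \<alpha>"
  shows "(Fnl_odd N \<alpha> has_real_derivative 2 * Fnl' N \<alpha> p) (at p)"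
proof -
  have "((\<lambda>q. Fnl N \<alpha> (- q)) has_real_derivative Fnl' N \<alpha> (- p) * (- 1)) (at p)"
    by (rule DERIV_chain2[OF has_real_derivative_Fnl[OF assms]]) (auto intro!: derivative_eq_intros)
  from DERIV_diff[OF has_real_derivative_Fnl[OF assms] this] show ?thesis
    unfolding Fnl_odd_def[abs_def] by (simp add: Fnl'_eq)
qed

lemma continuous_on_Fnl_odd: "2 \<le> real N + \<alpha> \<Longrightarrow> continuous_on S (Fnl_odd N \<alpha>)"
  using has_real_derivative_Fnl_odd by (meson DERIV_isCont continuous_at_imp_continuous_on)

lemma borel_measurable_Fnl_odd: "2 \<le> real N + \<alpha> \<Longrightarrow> Fnl_odd N \<alpha> \<in> borel_measurable borel"
  by (rule borel_measurable_continuous_onI) (rule continuous_on_Fnl_odd)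

lemma abs_Fnl_odd_le: "2 \<le> real N + \<alpha> \<Longrightarrow> \<bar>Fnl_odd N \<alpha> p\<bar> \<le> integral UNIV (Fnl_density N \<alpha>)"
  unfolding Fnl_odd_def
  using Fnl_nonneg[of N \<alpha> p] Fnl_nonneg[of N \<alpha> "- p"]
    Fnl_le_integral_UNIV[of N \<alpha> p] Fnl_le_integral_UNIV[of N \<alpha> "- p"]
  by linarith

lemma Fnl_odd_diff_eq_integral:
  assumes "2 \<le> real N + \<alpha>"
  shows "Fnl_odd N \<alpha> b - Fnl_odd N \<alpha> a
    = (b - a) * (2 * integral {0..1} (\<lambda>\<rho>. Fnl' N \<alpha> (a + \<rho> * (b - a))))"
proof -
  have "((\<lambda>\<rho>. (b - a) * (2 * Fnl' N \<alpha> (a + \<rho> * (b - a)))) has_integral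
        (Fnl_odd N \<alpha> (a + 1 * (b - a)) - Fnl_odd N \<alpha> (a + 0 * (b - a)))) {0..1}"
  proof (rule fundamental_theorem_of_calculus)
    fix \<rho> :: real
    have "((\<lambda>\<rho>. Fnl_odd N \<alpha> (a + \<rho> * (b - a))) has_real_derivative
        2 * Fnl' N \<alpha> (a + \<rho> * (b - a)) * (b - a)) (at \<rho>)"
      by (rule DERIV_chain2[OF has_real_derivative_Fnl_odd[OF assms]]) (auto intro!: derivative_eq_intros)
    then show "((\<lambda>\<rho>. Fnl_odd N \<alpha> (a + \<rho> * (b - a))) has_vector_derivative
        (b - a) * (2 * Fnl' N \<alpha> (a + \<rho> * (b - a)))) (at \<rho> within {0..1})"
      by (simp add: has_real_derivative_iff_has_vector_derivative[symmetric] mult.commute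
          has_field_derivative_at_within)
  qed simp
  moreover have "continuous_on {0..1} (\<lambda>\<rho>. Fnl' N \<alpha> (a + \<rho> * (b - a)))"
    unfolding Fnl'_eq
    by (intro continuous_intros continuous_on_compose2[OF continuous_on_Fnl_density[of UNIV]]) auto
  then have "((\<lambda>\<rho>. (b - a) * (2 * Fnl' N \<alpha> (a + \<rho> * (b - a)))) has_integral
        ((b - a) * (2 * integral {0..1} (\<lambda>\<rho>. Fnl' N \<alpha> (a + \<rho> * (b - a)))))) {0..1}"
    by (intro has_integral_mult_right integrable_integral integrable_continuous_real)
  ultimately show ?thesis by (simp add: has_integral_unique)
qed

lemma integral_Fnl_density_segment:
  assumes "2 \<le> real N + \<alpha>"
  shows "0 < integral {0..1} (\<lambda>\<rho>. Fnl_density N \<alpha> (a + \<rho> * c))"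
    and "integral {0..1} (\<lambda>\<rho>. Fnl_density N \<alpha> (a + \<rho> * c)) \<le> 1"
proof -
  have int: "(\<lambda>\<rho>. Fnl_density N \<alpha> (a + \<rho> * c)) integrable_on {0..1}"
    by (intro integrable_continuous_real continuous_intros
        continuous_on_compose2[OF continuous_on_Fnl_density[of UNIV]]) auto
  have "integral {0..1} (\<lambda>\<rho>. Fnl_density N \<alpha> (a + \<rho> * c)) \<le> integral {0..1::real} (\<lambda>\<rho>. 1)"
    by (rule integral_le[OF int]) (use Fnl_density_le_one assms in auto)
  then show "integral {0..1} (\<lambda>\<rho>. Fnl_density N \<alpha> (a + \<rho> * c)) \<le> 1" by simp
  define m where "m = Fnl_density N \<alpha> (\<bar>a\<bar> + \<bar>c\<bar>)"
  have "m \<le> Fnl_density N \<alpha> (a + \<rho> * c)" if "\<rho> \<in> {0..1}" for \<rho>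
  proof -
    have "\<bar>a + \<rho> * c\<bar> \<le> \<bar>a\<bar> + \<bar>c\<bar>"
      using that by (auto simp: abs_mult intro!: order.trans[OF abs_triangle_ineq] mult_left_le_one_le)
    then have "(a + \<rho> * c)\<^sup>2 \<le> (\<bar>a\<bar> + \<bar>c\<bar>)\<^sup>2"
      by (metis abs_ge_zero power2_abs power_mono)
    then show ?thesis unfolding m_def Fnl_density_def
      using assms by (intro powr_mono2') (auto simp: add_pos_nonneg)
  qed
  then have "integral {0..1::real} (\<lambda>\<rho>. m) \<le> integral {0..1} (\<lambda>\<rho>. Fnl_density N \<alpha> (a + \<rho> * c))"
    by (intro integral_le[OF _ int]) auto
  then show "0 < integral {0..1} (\<lambda>\<rho>. Fnl_density N \<alpha> (a + \<rho> * c))"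
    using Fnl_density_pos[of N \<alpha> "\<bar>a\<bar> + \<bar>c\<bar>"] by (simp add: m_def)
qed

lemma abs_Fnl_odd_diff_le:
  assumes "2 \<le> real N + \<alpha>"
  shows "\<bar>Fnl_odd N \<alpha> b - Fnl_odd N \<alpha> a\<bar> \<le> 2 * \<bar>b - a\<bar>"
proof -
  define I where "I = integral {0..1} (\<lambda>\<rho>. Fnl_density N \<alpha> (a + \<rho> * (b - a)))"
  have I: "0 \<le> I" "I \<le> 1"
    unfolding I_def using integral_Fnl_density_segment[OF assms] by (auto intro: less_imp_le)
  have "Fnl_odd N \<alpha> b - Fnl_odd N \<alpha> a = - ((b - a) * (2 * I))"
    unfolding Fnl_odd_diff_eq_integral[OF assms] I_def Fnl'_eq by simp
  then have "\<bar>Fnl_odd N \<alpha> b - Fnl_odd N \<alpha> a\<bar> = \<bar>b - a\<bar> * (2 * I)"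
    using I by (simp add: abs_mult)
  also have "\<dots> \<le> 2 * \<bar>b - a\<bar>" using mult_left_le_one_le[of "\<bar>b - a\<bar>" I] I by simp
  finally show ?thesis .
qed

lemma qtilde_pos: "2 \<le> real N + \<alpha> \<Longrightarrow> 0 < qtilde N \<alpha> u v x y"
  unfolding qtilde_def Fnl'_eq using integral_Fnl_density_segment(1) by simp

section \<open>Integrability of powers of the distance\<close>

lemma exists_dyadic_le_less:
  assumes "1 \<le> (t::real)"
  shows "\<exists>k::nat. 2 ^ k \<le> t \<and> t < 2 ^ (k + 1)"
proof -
  define k where "k = nat \<lfloor>log 2 t\<rfloor>"
  have "\<lfloor>log 2 t\<rfloor> = int k" using assms by (simp add: k_def)
  then have "2 powr real k \<le> t \<and> t < 2 powr real (k + 1)"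
    using assms by (simp add: floor_log_eq_powr_iff add.commute)
  then show ?thesis by (simp only: powr_realpow) blast
qed

lemma exists_dyadic_less_le:
  assumes "1 < (t::real)"
  shows "\<exists>k::nat. 2 ^ k < t \<and> t \<le> 2 ^ (k + 1)"
proof -
  define k where "k = nat \<lceil>log 2 t\<rceil> - 1"
  have "0 < log 2 t" using assms by simp
  then have "\<lceil>log 2 t\<rceil> = int k + 1" unfolding k_def by linarith
  then have "2 powr real k < t \<and> t \<le> 2 powr real (k + 1)"
    using assms by (simp add: ceiling_log_eq_powr_iff)
  then show ?thesis by (simp only: powr_realpow) blast
qed

lemma borel_measurable_norm_diff_powr [measurable]:
  "(\<lambda>y::'a::euclidean_space. norm (x - y) powr a) \<in> borel_measurable borel"
  by (intro powr_real_measurable borel_measurable_continuous_onI continuous_intros)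

lemma sets_borel_ball [measurable]: "ball (x::'a::euclidean_space) r \<in> sets borel"
  by simp

lemma nn_integral_dominated_by_balls_finite:
  fixes x :: "'a::euclidean_space" and f :: "'a \<Rightarrow> ennreal"
  assumes dom: "\<And>y. f y \<le> (\<Sum>k. ennreal (a k) * indicator (ball x (r k)) y)"
    and a: "\<And>k. 0 \<le> a k" and r: "\<And>k. 0 \<le> r k"
    and summable: "summable (\<lambda>k. a k * r k ^ DIM('a))"
  shows "(\<integral>\<^sup>+y. f y \<partial>lborel) < \<infinity>"
proof -
  define c where "c = measure lborel (ball (0::'a) 1)"
  have c: "0 \<le> c" unfolding c_def by simp
  have ball: "emeasure lborel (ball x (r k)) = ennreal (r k ^ DIM('a) * c)" for k
    using emeasure_lborel_ball_finite[of x "r k"] content_ball_conv_unit_ball[OF r[of k], of x]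
    by (simp add: emeasure_eq_ennreal_measure c_def)
  have "(\<integral>\<^sup>+y. f y \<partial>lborel) \<le> (\<integral>\<^sup>+y. (\<Sum>k. ennreal (a k) * indicator (ball x (r k)) y) \<partial>lborel)"
    by (intro nn_integral_mono dom)
  also have "\<dots> = (\<Sum>k. \<integral>\<^sup>+y. ennreal (a k) * indicator (ball x (r k)) y \<partial>lborel)"
    by (rule nn_integral_suminf) measurable
  also have "\<dots> = (\<Sum>k. ennreal (a k * r k ^ DIM('a) * c))"
    using a r c by (simp add: nn_integral_cmult_indicator ball ennreal_mult mult.assoc)
  also have "\<dots> = ennreal (\<Sum>k. a k * r k ^ DIM('a) * c)"
    using a r c by (intro suminf_ennreal2 summable_mult2 summable) auto
  finally show ?thesis by (simp add: le_less_trans)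
qed

lemma powr_mult_2_power: "0 < R \<Longrightarrow> (2 ^ k * R) powr a = (2 powr a) ^ k * R powr (a::real)"
  by (simp add: powr_mult powr_realpow[symmetric] powr_powr mult.commute)

lemma powr_divide_2_power: "0 < R \<Longrightarrow> (R / 2 ^ k) powr a = R powr (a::real) / (2 powr a) ^ k"
  by (simp add: powr_divide powr_realpow[symmetric] powr_powr mult.commute)

lemma set_integrable_norm_powr_outside_ball:
  fixes x :: "'a::euclidean_space"
  assumes s: "real DIM('a) < s" and R: "0 < R"
  shows "set_integrable lborel (- ball x R) (\<lambda>y. norm (x - y) powr (- s))"
  unfolding set_integrable_def
proof (rule integrableI_bounded)
  define d where "d = DIM('a)"
  define a where "a k = (2 ^ k * R) powr (- s)" for k :: nat
  define r where "r k = 2 ^ (k + 1) * R" for k :: nat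
  define q where "q = 2 powr (- s) * 2 ^ d"
  have q: "0 \<le> q" "q < 1"
    using s by (simp_all add: q_def d_def powr_realpow[symmetric] powr_add[symmetric] powr_less_one)
  have "a k * r k ^ d = (R powr (- s) * 2 ^ d * R ^ d) * q ^ k" for k
    unfolding a_def r_def q_def powr_mult_2_power[OF R]
    by (simp add: power_mult_distrib power_add mult_ac flip: power_mult)
  then have summable: "summable (\<lambda>k. a k * r k ^ d)"
    using q by (simp add: summable_mult summable_geometric)
  have dom: "ennreal (norm (indicator (- ball x R) y *\<^sub>R norm (x - y) powr (- s)))
      \<le> (\<Sum>k. ennreal (a k) * indicator (ball x (r k)) y)" for y
  proof (cases "y \<in> ball x R")
    case False
    then have "1 \<le> norm (x - y) / R" using R by (simp add: dist_norm)
    then obtain k :: nat where k: "2 ^ k \<le> norm (x - y) / R" "norm (x - y) / R < 2 ^ (k + 1)"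
      using exists_dyadic_le_less by blast
    have "norm (x - y) powr (- s) \<le> a k"
      unfolding a_def using k R s by (intro powr_mono2') (auto simp: field_simps)
    moreover have "y \<in> ball x (r k)"
      using k R by (simp add: r_def dist_norm field_simps)
    ultimately have "ennreal (norm (indicator (- ball x R) y *\<^sub>R norm (x - y) powr (- s)))
        \<le> ennreal (a k) * indicator (ball x (r k)) y"
      using False by (simp add: ennreal_leI)
    also have "\<dots> \<le> (\<Sum>k. ennreal (a k) * indicator (ball x (r k)) y)"
      using sum_le_suminf[OF summableI, of "{k}"] by simp
    finally show ?thesis .
  qed simp
  show "(\<integral>\<^sup>+y. ennreal (norm (indicator (- ball x R) y *\<^sub>R norm (x - y) powr (- s))) \<partial>lborel) < \<infinity>"
    using R summable unfolding d_def
    by (intro nn_integral_dominated_by_balls_finite[OF dom]) (auto simp: a_def r_def)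
qed measurable

lemma set_integrable_norm_powr_ball:
  fixes x :: "'a::euclidean_space"
  assumes \<tau>: "0 \<le> \<tau>" "\<tau> < real DIM('a)" and R: "0 < R"
  shows "set_integrable lborel (ball x R) (\<lambda>y. norm (x - y) powr (- \<tau>))"
  unfolding set_integrable_def
proof (rule integrableI_bounded)
  define d where "d = DIM('a)"
  define a where "a k = (R / 2 ^ (k + 1)) powr (- \<tau>)" for k :: nat
  define r where "r k = R / 2 ^ k" for k :: nat
  define q where "q = 2 powr \<tau> / 2 ^ d"
  have q: "0 \<le> q" "q < 1"
    using \<tau> by (simp_all add: q_def d_def powr_realpow[symmetric])
  have "a k * r k ^ d = (R powr (real d - \<tau>) * 2 powr \<tau>) * q ^ k" for k
  proof -
    have "a k = R powr (- \<tau>) * (2 powr \<tau>) ^ (k + 1)"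
      unfolding a_def powr_divide_2_power[OF R] by (simp add: powr_minus power_inverse divide_inverse)
    moreover have "r k ^ d = R ^ d / (2 ^ d) ^ k"
      unfolding r_def by (simp add: power_divide flip: power_mult)
    ultimately have "a k * r k ^ d = (R powr (- \<tau>) * R ^ d) * 2 powr \<tau> * ((2 powr \<tau>) ^ k / (2 ^ d) ^ k)"
      by (simp add: mult_ac divide_inverse)
    also have "R powr (- \<tau>) * R ^ d = R powr (real d - \<tau>)"
      using R by (simp add: powr_realpow[symmetric] powr_add[symmetric])
    finally show ?thesis unfolding q_def power_divide .
  qed
  then have summable: "summable (\<lambda>k. a k * r k ^ d)"
    using q by (simp add: summable_mult summable_geometric)
  have dom: "ennreal (norm (indicator (ball x R) y *\<^sub>R norm (x - y) powr (- \<tau>)))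
      \<le> (\<Sum>k. ennreal (a k) * indicator (ball x (r k)) y)" for y
  proof (cases "y \<in> ball x R \<and> y \<noteq> x")
    case True
    then have n: "0 < norm (x - y)" "1 < R / norm (x - y)" by (auto simp: dist_norm)
    then obtain k :: nat where k: "2 ^ k < R / norm (x - y)" "R / norm (x - y) \<le> 2 ^ (k + 1)"
      using exists_dyadic_less_le by blast
    have "norm (x - y) powr (- \<tau>) \<le> a k"
      unfolding a_def using k n R \<tau> by (intro powr_mono2') (auto simp: field_simps)
    moreover have "y \<in> ball x (r k)"
      using k n by (simp add: r_def dist_norm field_simps)
    ultimately have "ennreal (norm (indicator (ball x R) y *\<^sub>R norm (x - y) powr (- \<tau>)))
        \<le> ennreal (a k) * indicator (ball x (r k)) y"
      using True by (simp add: ennreal_leI)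
    also have "\<dots> \<le> (\<Sum>k. ennreal (a k) * indicator (ball x (r k)) y)"
      using sum_le_suminf[OF summableI, of "{k}"] by simp
    finally show ?thesis .
  qed auto
  show "(\<integral>\<^sup>+y. ennreal (norm (indicator (ball x R) y *\<^sub>R norm (x - y) powr (- \<tau>))) \<partial>lborel) < \<infinity>"
    using R summable unfolding d_def
    by (intro nn_integral_dominated_by_balls_finite[OF dom]) (auto simp: a_def r_def)
qed measurable

lemma set_integrable_norm_powr_bound:
  fixes x :: "'a::euclidean_space" and F :: "'a \<Rightarrow> real"
  assumes "set_integrable lborel A (\<lambda>y. norm (x - y) powr a)" "A \<in> sets borel"
    and "F \<in> borel_measurable borel"
    and "\<And>y. y \<in> A \<Longrightarrow> \<bar>F y\<bar> \<le> M * norm (x - y) powr a"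
  shows "set_integrable lborel A F"
  unfolding set_integrable_def
proof (rule Bochner_Integration.integrable_bound)
  show "integrable lborel (\<lambda>y. M * (indicator A y * norm (x - y) powr a))"
    using assms(1) unfolding set_integrable_def by simp
  show "(\<lambda>y. indicator A y *\<^sub>R F y) \<in> borel_measurable lborel"
    using assms(2,3) by measurable
  show "AE y in lborel. norm (indicator A y *\<^sub>R F y) \<le> norm (M * (indicator A y * norm (x - y) powr a))"
    using assms(4) by (intro AE_I2) (auto simp: indicator_def intro: order_trans[OF _ abs_ge_self])
qed

lemma tendsto_set_integral_outside_ball:
  fixes x :: "'a::euclidean_space" and H :: "'a \<Rightarrow> real"
  assumes H: "integrable lborel H"
  shows "((\<lambda>\<epsilon>. LINT y : - ball x \<epsilon> | lborel. H y) \<longlongrightarrow> integral\<^sup>L lborel H) (at_right 0)"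
proof (rule tendsto_at_right_sequentially[of 0 1])
  fix S :: "nat \<Rightarrow> real" assume S: "S \<longlonglongrightarrow> 0"
  have "AE y in lborel. (\<lambda>n. indicator (- ball x (S n)) y *\<^sub>R H y) \<longlonglongrightarrow> H y"
    using AE_lborel_singleton[of x]
  proof eventually_elim
    case (elim y)
    then have "eventually (\<lambda>n. S n < dist x y) sequentially"
      using order_tendstoD(2)[OF S] by simp
    then have "eventually (\<lambda>n. indicator (- ball x (S n)) y *\<^sub>R H y = H y) sequentially"
      by eventually_elim simp
    then show ?case by (rule tendsto_eventually)
  qed
  then show "(\<lambda>n. LINT y : - ball x (S n) | lborel. H y) \<longlonglongrightarrow> integral\<^sup>L lborel H"
    unfolding set_lebesgue_integral_def
    using H by (intro integral_dominated_convergence[where w = "\<lambda>y. norm (H y)"])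
      (auto simp: indicator_def)
qed simp

lemma lborel_integral_eq_0_if_odd:
  fixes x :: "'a::euclidean_space" and F :: "'a \<Rightarrow> real"
  assumes F: "F \<in> borel_measurable borel" and odd: "\<And>y. F (2 *\<^sub>R x - y) = - F y"
  shows "integral\<^sup>L lborel F = 0"
proof -
  define T where "T y = 2 *\<^sub>R x + (-1) *\<^sub>R y" for y :: 'a
  have "lborel = density (distr lborel borel T) (\<lambda>_. \<bar>-1::real\<bar> ^ DIM('a))"
    unfolding T_def[abs_def] by (rule lborel_affine) simp
  then have T: "distr lborel borel T = lborel" by (simp add: density_1)
  have "integral\<^sup>L lborel F = integral\<^sup>L (distr lborel borel T) F" by (simp add: T)
  also have "\<dots> = (LINT y | lborel. F (T y))"
    by (rule integral_distr) (auto simp: T_def[abs_def] F)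
  also have "\<dots> = - integral\<^sup>L lborel F" by (simp add: T_def odd)
  finally show ?thesis by simp
qed

lemma set_integral_ball_neg:
  fixes W :: "'a::euclidean_space \<Rightarrow> real"
  assumes W: "set_integrable lborel (ball z r) W" and r: "0 < r"
    and neg: "\<And>y. y \<in> ball z r \<Longrightarrow> W y < 0"
  shows "(LINT y : ball z r | lborel. W y) < 0"
proof -
  define h where "h y = - (indicator (ball z r) y * W y)" for y
  have h: "integrable lborel h" "AE y in lborel. 0 \<le> h y"
    using W neg unfolding h_def set_integrable_def
    by (auto intro!: AE_I2 simp: indicator_def less_imp_le)
  have eq: "(LINT y : ball z r | lborel. W y) = - integral\<^sup>L lborel h"
    unfolding h_def set_lebesgue_integral_def by simp
  have "integral\<^sup>L lborel h \<noteq> 0"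
  proof
    assume "integral\<^sup>L lborel h = 0"
    then have "AE y in lborel. h y = 0"
      using integral_nonneg_eq_0_iff_AE[OF h] by simp
    then have "AE y in lborel. y \<notin> ball z r"
    proof eventually_elim
      case (elim y)
      show "y \<notin> ball z r"
      proof
        assume y: "y \<in> ball z r"
        then have "h y = - W y" by (simp add: h_def)
        with neg[OF y] elim show False by simp
      qed
    qed
    then have "emeasure lborel (ball z r) = 0"
      by (subst (asm) AE_iff_measurable[of "ball z r"]) auto
    moreover have "0 < emeasure lborel (ball z r)"
      using content_ball_pos[OF r, of z] emeasure_lborel_ball_finite[of z r]
      by (simp add: emeasure_eq_ennreal_measure)
    ultimately show False by simp
  qed
  with integral_nonneg_AE[OF h(2)] show ?thesis unfolding eq by simp
qed

section \<open>Existence of the principal value\<close>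

lemma holder_gradient_taylor_bound:
  fixes f :: "'a::euclidean_space \<Rightarrow> real" and g :: "'a \<Rightarrow> 'a"
  assumes der: "\<And>z. z \<in> cball x r \<Longrightarrow> (f has_derivative (\<lambda>h. g z \<bullet> h)) (at z)"
    and hol: "\<And>z. z \<in> cball x r \<Longrightarrow> norm (g z - g x) \<le> C * dist z x powr \<beta>"
    and \<beta>: "0 \<le> \<beta>" and C: "0 \<le> C" and y: "y \<in> cball x r"
  shows "\<bar>f y - f x - g x \<bullet> (y - x)\<bar> \<le> C * norm (y - x) powr \<beta> * norm (y - x)"
proof -
  define \<rho> where "\<rho> = norm (y - x)"
  have sub: "cball x \<rho> \<subseteq> cball x r"
    using y by (auto simp: \<rho>_def dist_norm norm_minus_commute)
  have "norm ((f y - g x \<bullet> y) - (f x - g x \<bullet> x)) \<le> (C * \<rho> powr \<beta>) * norm (y - x)"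
  proof (rule differentiable_bound[of "cball x \<rho>" _ "\<lambda>z k. g z \<bullet> k - g x \<bullet> k"])
    fix z assume z: "z \<in> cball x \<rho>"
    have "(f has_derivative (\<lambda>h. g z \<bullet> h)) (at z within cball x \<rho>)"
      using z sub by (intro has_derivative_at_withinI[OF der]) blast
    moreover have "((\<lambda>z. g x \<bullet> z) has_derivative (\<lambda>k. g x \<bullet> k)) (at z within cball x \<rho>)"
      by (rule bounded_linear_imp_has_derivative) (rule bounded_linear_inner_right)
    ultimately show "((\<lambda>z. f z - g x \<bullet> z) has_derivative (\<lambda>k. g z \<bullet> k - g x \<bullet> k)) (at z within cball x \<rho>)"
      by (rule has_derivative_diff)
    have "norm (g z - g x) \<le> C * \<rho> powr \<beta>"
    proof -
      have "dist z x powr \<beta> \<le> \<rho> powr \<beta>"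
        using z \<beta> by (intro powr_mono2) (auto simp: dist_commute)
      then show ?thesis using hol[of z] z sub C by (meson mult_left_mono order_trans subsetD)
    qed
    then show "onorm (\<lambda>k. g z \<bullet> k - g x \<bullet> k) \<le> C * \<rho> powr \<beta>"
      by (intro onorm_le)
         (metis inner_diff_left real_norm_def Cauchy_Schwarz_ineq2 mult_right_mono norm_ge_zero order_trans)
  qed (auto simp: \<rho>_def dist_norm norm_minus_commute)
  then show ?thesis unfolding \<rho>_def by (simp add: inner_diff_right)
qed

lemma C1beta_loc_taylor_bound:
  fixes f :: "'a::euclidean_space \<Rightarrow> real"
  assumes f: "C1beta_loc \<beta> \<Omega> f" and \<Omega>: "open \<Omega>" "x \<in> \<Omega>" and \<beta>: "0 \<le> \<beta>"
  obtains g r C where "0 < r"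
    "\<And>y. y \<in> cball x r \<Longrightarrow> \<bar>f y - f x - g \<bullet> (y - x)\<bar> \<le> C * norm (y - x) powr \<beta> * norm (y - x)"
proof -
  obtain g :: "'a \<Rightarrow> 'a" where der: "\<forall>z\<in>\<Omega>. (f has_derivative (\<lambda>h. g z \<bullet> h)) (at z)"
    and hol: "\<forall>K. compact K \<and> K \<subseteq> \<Omega> \<longrightarrow> (\<exists>C. \<forall>x\<in>K. \<forall>y\<in>K. norm (g x - g y) \<le> C * dist x y powr \<beta>)"
    using f unfolding C1beta_loc_def by blast
  obtain r where r: "0 < r" "cball x r \<subseteq> \<Omega>" using \<Omega> open_contains_cball by blast
  moreover have "compact (cball x r)" by simp
  ultimately obtain C where C: "\<forall>z\<in>cball x r. \<forall>w\<in>cball x r. norm (g z - g w) \<le> C * dist z w powr \<beta>"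
    using hol by blast
  have "\<bar>f y - f x - g x \<bullet> (y - x)\<bar> \<le> \<bar>C\<bar> * norm (y - x) powr \<beta> * norm (y - x)"
    if "y \<in> cball x r" for y
  proof (rule holder_gradient_taylor_bound[OF _ _ \<beta> _ that])
    fix z assume z: "z \<in> cball x r"
    show "(f has_derivative (\<lambda>h. g z \<bullet> h)) (at z)" using der r z by blast
    have "x \<in> cball x r" using r(1) by simp
    with C z have "norm (g z - g x) \<le> C * dist z x powr \<beta>" by blast
    moreover have "C * dist z x powr \<beta> \<le> \<bar>C\<bar> * dist z x powr \<beta>" by (simp add: mult_right_mono)
    ultimately show "norm (g z - g x) \<le> \<bar>C\<bar> * dist z x powr \<beta>" by linarith
  qed simp
  with r(1) show ?thesis by (intro that[of r "g x" "\<bar>C\<bar>"]) auto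
qed

definition NMC_integrand :: "nat \<Rightarrow> real \<Rightarrow> ('a::euclidean_space \<Rightarrow> real) \<Rightarrow> 'a \<Rightarrow> 'a \<Rightarrow> real" where
  "NMC_integrand N \<alpha> f x y = Fnl_odd N \<alpha> (pquot f x y) / norm (x - y) powr (real N - 1 + \<alpha>)"

lemma NMC_eq_Lim:
  "NMC N \<alpha> f x = Lim (at_right 0) (\<lambda>\<epsilon>. LINT y : - ball x \<epsilon> | lborel. NMC_integrand N \<alpha> f x y)"
  unfolding NMC_def NMC_integrand_def Fnl_odd_def ..

lemma borel_measurable_NMC_integrand:
  assumes "2 \<le> real N + \<alpha>" "f \<in> borel_measurable borel"
  shows "NMC_integrand N \<alpha> f x \<in> borel_measurable borel"
proof -
  have [measurable]: "Fnl_odd N \<alpha> \<in> borel_measurable borel" "f \<in> borel_measurable borel"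
    using assms by (auto intro: borel_measurable_Fnl_odd)
  show ?thesis unfolding NMC_integrand_def[abs_def] pquot_def by measurable
qed

lemma abs_NMC_integrand_le:
  assumes "2 \<le> real N + \<alpha>"
  shows "\<bar>NMC_integrand N \<alpha> f x y\<bar>
    \<le> integral UNIV (Fnl_density N \<alpha>) * norm (x - y) powr (- (real N - 1 + \<alpha>))"
proof -
  have "\<bar>NMC_integrand N \<alpha> f x y\<bar> = \<bar>Fnl_odd N \<alpha> (pquot f x y)\<bar> * norm (x - y) powr (- (real N - 1 + \<alpha>))"
    unfolding NMC_integrand_def powr_minus by (simp add: abs_mult divide_inverse)
  also have "\<dots> \<le> integral UNIV (Fnl_density N \<alpha>) * norm (x - y) powr (- (real N - 1 + \<alpha>))"
    by (intro mult_right_mono abs_Fnl_odd_le[OF assms]) simp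
  finally show ?thesis .
qed

lemma set_integrable_NMC_integrand:
  fixes f :: "'a::euclidean_space \<Rightarrow> real"
  assumes N: "2 \<le> N" and dim: "DIM('a) = N - 1" and \<alpha>: "0 < \<alpha>" and \<epsilon>: "0 < \<epsilon>"
    and f: "f \<in> borel_measurable borel"
  shows "set_integrable lborel (- ball x \<epsilon>) (NMC_integrand N \<alpha> f x)"
proof -
  have Na: "2 \<le> real N + \<alpha>" using N \<alpha> by simp
  have "real DIM('a) < real N - 1 + \<alpha>" using N dim \<alpha> by (simp add: of_nat_diff)
  from set_integrable_norm_powr_outside_ball[OF this \<epsilon>] show ?thesis
  proof (rule set_integrable_norm_powr_bound)
    show "\<bar>NMC_integrand N \<alpha> f x y\<bar>
      \<le> integral UNIV (Fnl_density N \<alpha>) * norm (x - y) powr (- (real N - 1 + \<alpha>))" for y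
      by (rule abs_NMC_integrand_le[OF Na])
  qed (auto intro: borel_measurable_NMC_integrand[OF Na f])
qed

lemma abs_NMC_integrand_minus_tangent_le:
  fixes f :: "'a::euclidean_space \<Rightarrow> real"
  assumes Na: "2 \<le> real N + \<alpha>"
    and tay: "\<bar>f y - f x - g \<bullet> (y - x)\<bar> \<le> C * norm (y - x) powr \<beta> * norm (y - x)"
  shows "\<bar>NMC_integrand N \<alpha> f x y - NMC_integrand N \<alpha> (\<lambda>z. g \<bullet> (z - x)) x y\<bar>
    \<le> 2 * C * norm (x - y) powr (\<beta> - (real N - 1 + \<alpha>))"
proof (cases "y = x")
  case False
  define n where "n = norm (x - y)"
  have n: "0 < n" using False by (simp add: n_def)
  define p where "p = pquot (\<lambda>z. g \<bullet> (z - x)) x y"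
  have "pquot f x y - p = (f y - f x - g \<bullet> (y - x)) / n"
    unfolding pquot_def p_def n_def by (simp add: diff_divide_distrib)
  then have "\<bar>pquot f x y - p\<bar> \<le> C * n powr \<beta>"
    using tay n by (simp add: divide_le_eq norm_minus_commute n_def)
  then have "2 * \<bar>pquot f x y - p\<bar> \<le> 2 * C * n powr \<beta>" by simp
  with abs_Fnl_odd_diff_le[OF Na]
  have "\<bar>Fnl_odd N \<alpha> (pquot f x y) - Fnl_odd N \<alpha> p\<bar> \<le> 2 * C * n powr \<beta>"
    by (rule order_trans)
  then have "\<bar>Fnl_odd N \<alpha> (pquot f x y) - Fnl_odd N \<alpha> p\<bar> / n powr (real N - 1 + \<alpha>)
      \<le> 2 * C * n powr \<beta> / n powr (real N - 1 + \<alpha>)"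
    by (simp add: divide_right_mono)
  then show ?thesis
    unfolding NMC_integrand_def p_def[symmetric] n_def[symmetric] diff_divide_distrib[symmetric]
    by (simp add: powr_diff)
qed (simp add: NMC_integrand_def pquot_def)

text \<open>The integrand of a tangent hyperplane is odd about the point of tangency.\<close>
lemma set_integral_NMC_integrand_tangent_eq_0:
  fixes x g :: "'a::euclidean_space"
  assumes Na: "2 \<le> real N + \<alpha>"
  shows "(LINT y : - ball x \<epsilon> | lborel. indicator (ball x r) y * NMC_integrand N \<alpha> (\<lambda>z. g \<bullet> (z - x)) x y) = 0"
  unfolding set_lebesgue_integral_def
proof (rule lborel_integral_eq_0_if_odd[where x = x])
  have "(\<lambda>z. g \<bullet> (z - x)) \<in> borel_measurable borel"
    by (intro borel_measurable_continuous_onI continuous_intros)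
  from borel_measurable_NMC_integrand[OF Na this] show
    "(\<lambda>y. indicator (- ball x \<epsilon>) y *\<^sub>R (indicator (ball x r) y * NMC_integrand N \<alpha> (\<lambda>z. g \<bullet> (z - x)) x y))
     \<in> borel_measurable borel"
    by measurable
  fix y
  have reflect: "x - (2 *\<^sub>R x - y) = y - x" "2 *\<^sub>R x - y - x = - (y - x)"
    by (simp_all add: scaleR_2 algebra_simps)
  have "pquot (\<lambda>z. g \<bullet> (z - x)) x (2 *\<^sub>R x - y) = - pquot (\<lambda>z. g \<bullet> (z - x)) x y"
    unfolding pquot_def reflect by (simp add: norm_minus_commute inner_diff_right diff_divide_distrib)
  then have "NMC_integrand N \<alpha> (\<lambda>z. g \<bullet> (z - x)) x (2 *\<^sub>R x - y) = - NMC_integrand N \<alpha> (\<lambda>z. g \<bullet> (z - x)) x y"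
    unfolding NMC_integrand_def reflect(1) by (simp add: Fnl_odd_minus norm_minus_commute)
  moreover have "dist x (2 *\<^sub>R x - y) = dist x y"
    unfolding dist_norm reflect by (simp add: norm_minus_commute)
  ultimately show "indicator (- ball x \<epsilon>) (2 *\<^sub>R x - y) *\<^sub>R
      (indicator (ball x r) (2 *\<^sub>R x - y) * NMC_integrand N \<alpha> (\<lambda>z. g \<bullet> (z - x)) x (2 *\<^sub>R x - y))
    = - (indicator (- ball x \<epsilon>) y *\<^sub>R (indicator (ball x r) y * NMC_integrand N \<alpha> (\<lambda>z. g \<bullet> (z - x)) x y))"
    by (simp add: indicator_def)
qed

text \<open>The Hoelder bound on the gradient leaves a singularity of order strictly less than the
  dimension after the tangent hyperplane has been subtracted.\<close>
lemma integrable_NMC_integrand_minus_tangent: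
  fixes f :: "'a::euclidean_space \<Rightarrow> real"
  assumes N: "2 \<le> N" and dim: "DIM('a) = N - 1" and \<alpha>: "0 < \<alpha>" and \<beta>: "\<alpha> < \<beta>" "\<beta> < 1"
    and f: "f \<in> borel_measurable borel" and r: "0 < r"
    and tay: "\<And>y. y \<in> cball x r \<Longrightarrow> \<bar>f y - f x - g \<bullet> (y - x)\<bar> \<le> C * norm (y - x) powr \<beta> * norm (y - x)"
  shows "integrable lborel
    (\<lambda>y. NMC_integrand N \<alpha> f x y - indicator (ball x r) y * NMC_integrand N \<alpha> (\<lambda>z. g \<bullet> (z - x)) x y)"
    (is "integrable lborel ?H")
proof -
  have Na: "2 \<le> real N + \<alpha>" using N \<alpha> by simp
  define s where "s = real N - 1 + \<alpha>"
  have s: "real DIM('a) < s" "0 \<le> s - \<beta>" "s - \<beta> < real DIM('a)"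
    using N dim \<alpha> \<beta> by (auto simp: s_def of_nat_diff)
  have "(\<lambda>z. g \<bullet> (z - x)) \<in> borel_measurable borel"
    by (intro borel_measurable_continuous_onI continuous_intros)
  with f have [measurable]: "?H \<in> borel_measurable borel"
    by (intro borel_measurable_diff borel_measurable_times borel_measurable_indicator
        borel_measurable_NMC_integrand[OF Na]) auto
  have "set_integrable lborel (ball x r \<union> - ball x r) ?H"
  proof (rule set_integrable_Un)
    show "set_integrable lborel (ball x r) ?H"
    proof (rule set_integrable_norm_powr_bound[OF set_integrable_norm_powr_ball[OF s(2,3) r]])
      fix y assume "y \<in> ball x r"
      then show "\<bar>?H y\<bar> \<le> 2 * C * norm (x - y) powr (- (s - \<beta>))"
        using abs_NMC_integrand_minus_tangent_le[OF Na tay[of y]] by (simp add: s_def)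
    qed auto
    show "set_integrable lborel (- ball x r) ?H"
    proof (rule set_integrable_norm_powr_bound[OF set_integrable_norm_powr_outside_ball[OF s(1) r]])
      fix y assume "y \<in> - ball x r"
      then show "\<bar>?H y\<bar> \<le> integral UNIV (Fnl_density N \<alpha>) * norm (x - y) powr (- s)"
        using abs_NMC_integrand_le[OF Na] by (simp add: s_def)
    qed auto
  qed auto
  then show ?thesis by (simp add: set_integrable_def)
qed

lemma NMC_truncations_tendsto:
  fixes f :: "'a::euclidean_space \<Rightarrow> real"
  assumes N: "2 \<le> N" and dim: "DIM('a) = N - 1" and \<alpha>: "0 < \<alpha>" and \<beta>: "\<alpha> < \<beta>" "\<beta> < 1"
    and \<Omega>: "open \<Omega>" "x \<in> \<Omega>" and f: "C1beta_loc \<beta> \<Omega> f" "continuous_on UNIV f"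
  shows "((\<lambda>\<epsilon>. LINT y : - ball x \<epsilon> | lborel. NMC_integrand N \<alpha> f x y) \<longlongrightarrow> NMC N \<alpha> f x) (at_right 0)"
proof -
  have Na: "2 \<le> real N + \<alpha>" using N \<alpha> by simp
  have f_meas: "f \<in> borel_measurable borel" using f(2) by (rule borel_measurable_continuous_onI)
  obtain g r C where r: "0 < r"
    and tay: "\<And>y. y \<in> cball x r \<Longrightarrow> \<bar>f y - f x - g \<bullet> (y - x)\<bar> \<le> C * norm (y - x) powr \<beta> * norm (y - x)"
    using C1beta_loc_taylor_bound[OF f(1) \<Omega>] \<alpha> \<beta> by (metis less_imp_le less_trans)
  define T where "T = NMC_integrand N \<alpha> (\<lambda>z. g \<bullet> (z - x)) x"
  define H where "H y = NMC_integrand N \<alpha> f x y - indicator (ball x r) y * T y" for y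
  have H: "integrable lborel H"
    unfolding H_def T_def by (rule integrable_NMC_integrand_minus_tangent[OF N dim \<alpha> \<beta> f_meas r tay])
  have "(LINT y : - ball x \<epsilon> | lborel. H y) = (LINT y : - ball x \<epsilon> | lborel. NMC_integrand N \<alpha> f x y)"
    if \<epsilon>: "0 < \<epsilon>" for \<epsilon>
  proof -
    have "(\<lambda>z. g \<bullet> (z - x)) \<in> borel_measurable borel"
      by (intro borel_measurable_continuous_onI continuous_intros)
    then have "set_integrable lborel (- ball x \<epsilon>) T"
      unfolding T_def by (rule set_integrable_NMC_integrand[OF N dim \<alpha> \<epsilon>])
    then have "integrable lborel (\<lambda>y. indicator (ball x r) y *\<^sub>R (indicator (- ball x \<epsilon>) y *\<^sub>R T y))"
      unfolding set_integrable_def by (rule integrable_mult_indicator[rotated]) simp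
    then have "set_integrable lborel (- ball x \<epsilon>) (\<lambda>y. indicator (ball x r) y * T y)"
      unfolding set_integrable_def by (simp add: mult.left_commute)
    with set_integrable_NMC_integrand[OF N dim \<alpha> \<epsilon> f_meas] show ?thesis
      unfolding H_def T_def using set_integral_NMC_integrand_tangent_eq_0[OF Na]
      by (simp add: set_integral_diff)
  qed
  then have "eventually (\<lambda>\<epsilon>. (LINT y : - ball x \<epsilon> | lborel. H y)
      = (LINT y : - ball x \<epsilon> | lborel. NMC_integrand N \<alpha> f x y)) (at_right 0)"
    using eventually_at_right_less[of 0] by (auto elim: eventually_mono)
  from Lim_transform_eventually[OF tendsto_set_integral_outside_ball[OF H] this]
  show ?thesis by (simp add: NMC_eq_Lim tendsto_Lim)
qed

section \<open>The comparison formula and the strong maximum principle\<close>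

lemma NMC_integrand_diff_eq:
  fixes u v :: "'a::euclidean_space \<Rightarrow> real"
  assumes Na: "2 \<le> real N + \<alpha>"
  shows "((u x - v x) - (u y - v y)) / norm (x - y) powr (real N + \<alpha>) * qtilde N \<alpha> u v x y
    = NMC_integrand N \<alpha> u x y - NMC_integrand N \<alpha> v x y"
proof (cases "y = x")
  case False
  define n where "n = norm (x - y)"
  have n: "0 < n" using False by (simp add: n_def)
  define a where "a = pquot v x y"
  define b where "b = pquot u x y"
  define I where "I = integral {0..1} (\<lambda>\<rho>. Fnl' N \<alpha> (a + \<rho> * (b - a)))"
  have "pquot (\<lambda>z. u z - v z) x y = b - a"
    unfolding a_def b_def pquot_def by (simp add: diff_divide_distrib)
  then have q: "qtilde N \<alpha> u v x y = - 2 * I"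
    unfolding qtilde_def I_def a_def by simp
  have num: "(u x - v x) - (u y - v y) = - (b - a) * n"
    unfolding a_def b_def pquot_def using n by (simp add: field_simps n_def)
  have den: "n powr (real N + \<alpha>) = n * n powr (real N - 1 + \<alpha>)"
    using n powr_add[of n 1 "real N - 1 + \<alpha>"] by simp
  have "((u x - v x) - (u y - v y)) / norm (x - y) powr (real N + \<alpha>) * qtilde N \<alpha> u v x y
      = (b - a) * (2 * I) / n powr (real N - 1 + \<alpha>)"
    unfolding num q n_def[symmetric] den using n by (simp add: field_simps)
  also have "\<dots> = (Fnl_odd N \<alpha> b - Fnl_odd N \<alpha> a) / n powr (real N - 1 + \<alpha>)"
    unfolding Fnl_odd_diff_eq_integral[OF Na] I_def ..
  finally show ?thesis
    unfolding NMC_integrand_def a_def b_def n_def by (simp add: diff_divide_distrib)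
qed (simp add: NMC_integrand_def pquot_def)

lemma NMC_diff_truncations_tendsto:
  fixes u v :: "'a::euclidean_space \<Rightarrow> real"
  assumes N: "2 \<le> N" and dim: "DIM('a) = N - 1" and \<alpha>: "0 < \<alpha>" and \<beta>: "\<alpha> < \<beta>" "\<beta> < 1"
    and \<Omega>: "open \<Omega>" "x \<in> \<Omega>"
    and u: "C1beta_loc \<beta> \<Omega> u" "continuous_on UNIV u"
    and v: "C1beta_loc \<beta> \<Omega> v" "continuous_on UNIV v"
  shows "((\<lambda>\<epsilon>. LINT y : - ball x \<epsilon> | lborel. NMC_integrand N \<alpha> u x y - NMC_integrand N \<alpha> v x y)
    \<longlongrightarrow> NMC N \<alpha> u x - NMC N \<alpha> v x) (at_right 0)"
proof -
  have "eventually (\<lambda>\<epsilon>. (LINT y : - ball x \<epsilon> | lborel. NMC_integrand N \<alpha> u x y)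
      - (LINT y : - ball x \<epsilon> | lborel. NMC_integrand N \<alpha> v x y)
      = (LINT y : - ball x \<epsilon> | lborel. NMC_integrand N \<alpha> u x y - NMC_integrand N \<alpha> v x y)) (at_right 0)"
    using eventually_at_right_less[of 0]
  proof eventually_elim
    case (elim \<epsilon>)
    have "u \<in> borel_measurable borel" "v \<in> borel_measurable borel"
      using u(2) v(2) by (auto intro: borel_measurable_continuous_onI)
    then show ?case
      by (intro set_integral_diff(2)[symmetric] set_integrable_NMC_integrand[OF N dim \<alpha> elim])
  qed
  with tendsto_diff[OF NMC_truncations_tendsto[OF N dim \<alpha> \<beta> \<Omega> u] NMC_truncations_tendsto[OF N dim \<alpha> \<beta> \<Omega> v]]
  show ?thesis by (rule Lim_transform_eventually)
qed

lemma truncated_integrals_limit_neg: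
  fixes W :: "'a::euclidean_space \<Rightarrow> real"
  assumes lim: "((\<lambda>\<epsilon>. LINT y : - ball x \<epsilon> | lborel. W y) \<longlongrightarrow> L) (at_right 0)"
    and int: "\<And>\<epsilon>. 0 < \<epsilon> \<Longrightarrow> set_integrable lborel (- ball x \<epsilon>) W"
    and nonpos: "\<And>y. W y \<le> 0" and neg: "\<And>y. y \<in> ball z r \<Longrightarrow> W y < 0"
    and r: "0 < r" "r < dist x z"
  shows "L < 0"
proof -
  define \<delta> where "\<delta> = dist x z - r"
  have \<delta>: "0 < \<delta>" using r by (simp add: \<delta>_def)
  have outside: "ball z r \<subseteq> - ball x \<epsilon>" if "\<epsilon> \<le> \<delta>" for \<epsilon>
  proof
    fix y assume "y \<in> ball z r"
    with dist_triangle[of x z y] that show "y \<in> - ball x \<epsilon>"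
      by (simp add: \<delta>_def dist_commute)
  qed
  have int_ball: "set_integrable lborel (ball z r) W"
    by (rule set_integrable_subset[OF int[OF \<delta>] _ outside]) auto
  have "(LINT y : - ball x \<epsilon> | lborel. W y) \<le> (LINT y : ball z r | lborel. W y)"
    if "0 < \<epsilon>" "\<epsilon> \<le> \<delta>" for \<epsilon>
    unfolding set_lebesgue_integral_def
  proof (rule integral_mono)
    show "integrable lborel (\<lambda>y. indicator (- ball x \<epsilon>) y *\<^sub>R W y)"
      using int[OF that(1)] by (simp add: set_integrable_def)
    show "integrable lborel (\<lambda>y. indicator (ball z r) y *\<^sub>R W y)"
      using int_ball by (simp add: set_integrable_def)
    show "indicator (- ball x \<epsilon>) y *\<^sub>R W y \<le> indicator (ball z r) y *\<^sub>R W y" for y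
      using outside[OF that(2)] nonpos[of y] by (auto simp: indicator_def)
  qed
  then have "L \<le> (LINT y : ball z r | lborel. W y)"
    by (intro tendsto_upperbound[OF lim] eventually_at_rightI[of 0 \<delta>]) (auto simp: \<delta>)
  also have "\<dots> < 0" by (rule set_integral_ball_neg[OF int_ball r(1) neg])
  finally show ?thesis .
qed

lemma NMC_diff_nonneg_at_min_imp_const:
  fixes u v :: "'a::euclidean_space \<Rightarrow> real"
  assumes N: "2 \<le> N" and dim: "DIM('a) = N - 1" and \<alpha>: "0 < \<alpha>" and \<beta>: "\<alpha> < \<beta>" "\<beta> < 1"
    and \<Omega>: "open \<Omega>" "x0 \<in> \<Omega>"
    and u: "C1beta_loc \<beta> \<Omega> u" "continuous_on UNIV u"
    and v: "C1beta_loc \<beta> \<Omega> v" "continuous_on UNIV v"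
    and nonneg: "0 \<le> NMC N \<alpha> u x0 - NMC N \<alpha> v x0"
    and min: "\<And>y. u x0 - v x0 \<le> u y - v y"
  shows "u y - v y = u x0 - v x0"
proof (rule ccontr)
  have Na: "2 \<le> real N + \<alpha>" using N \<alpha> by simp
  assume "u y - v y \<noteq> u x0 - v x0"
  with min[of y] have y: "y \<in> {z. u x0 - v x0 < u z - v z}" by simp
  then have "y \<noteq> x0" by auto
  have "open {z. u x0 - v x0 < u z - v z}"
    using u(2) v(2) by (intro open_Collect_less continuous_intros) auto
  with y obtain \<rho> where \<rho>: "0 < \<rho>" "ball y \<rho> \<subseteq> {z. u x0 - v x0 < u z - v z}"
    by (meson open_contains_ball)
  define r where "r = min \<rho> (dist x0 y / 2)"
  have d: "0 < dist x0 y" "r \<le> dist x0 y / 2" using \<open>y \<noteq> x0\<close> by (simp_all add: r_def)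
  have r: "0 < r" "r < dist x0 y"
    using \<rho>(1) d by (simp add: r_def del: zero_less_dist_iff, linarith)
  define W where "W z = NMC_integrand N \<alpha> u x0 z - NMC_integrand N \<alpha> v x0 z" for z
  have W: "W z = ((u x0 - v x0) - (u z - v z)) / norm (x0 - z) powr (real N + \<alpha>) * qtilde N \<alpha> u v x0 z" for z
    unfolding W_def by (rule NMC_integrand_diff_eq[OF Na, symmetric])
  have "NMC N \<alpha> u x0 - NMC N \<alpha> v x0 < 0"
  proof (rule truncated_integrals_limit_neg[OF _ _ _ _ r])
    show "((\<lambda>\<epsilon>. LINT z : - ball x0 \<epsilon> | lborel. W z) \<longlongrightarrow> NMC N \<alpha> u x0 - NMC N \<alpha> v x0) (at_right 0)"
      unfolding W_def by (rule NMC_diff_truncations_tendsto[OF N dim \<alpha> \<beta> \<Omega> u v])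
    show "set_integrable lborel (- ball x0 \<epsilon>) W" if "0 < \<epsilon>" for \<epsilon>
      unfolding W_def using u(2) v(2)
      by (intro set_integral_diff(1) set_integrable_NMC_integrand[OF N dim \<alpha> that]
          borel_measurable_continuous_onI)
    show "W z \<le> 0" for z
      unfolding W using min[of z] qtilde_pos[OF Na, of u v x0 z]
      by (intro mult_nonpos_nonneg divide_nonpos_nonneg) auto
    show "W z < 0" if "z \<in> ball y r" for z
    proof -
      have "u x0 - v x0 < u z - v z" using that \<rho>(2) by (auto simp: r_def)
      then have "z \<noteq> x0" by auto
      with \<open>u x0 - v x0 < u z - v z\<close> show ?thesis
        unfolding W using qtilde_pos[OF Na, of u v x0 z] by (intro mult_neg_pos divide_neg_pos) auto
    qed
  qed
  with nonneg show False by simp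
qed

theorem mainTheorem3:
  fixes N :: nat and \<alpha> \<beta> :: real and \<Omega> :: "'a::euclidean_space set"
    and u v :: "'a \<Rightarrow> real"
  assumes N: "N \<ge> 2" and dim: "DIM('a) = N - 1"
    and \<alpha>: "0 < \<alpha>" "\<alpha> < 1" and \<beta>: "\<alpha> < \<beta>" "\<beta> < 1"
    and \<Omega>: "open \<Omega>"
    and u: "C1beta_loc \<beta> \<Omega> u" "continuous_on UNIV u"
    and v: "C1beta_loc \<beta> \<Omega> v" "continuous_on UNIV v"
  shows "(\<forall>x\<in>\<Omega>.
           ((\<lambda>\<epsilon>. LINT y : - ball x \<epsilon> | lborel.
               ((u x - v x) - (u y - v y)) / norm (x - y) powr (real N + \<alpha>) * qtilde N \<alpha> u v x y)
             \<longlongrightarrow> NMC N \<alpha> u x - NMC N \<alpha> v x) (at_right 0))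
       \<and> ((\<forall>x\<in>\<Omega>. NMC N \<alpha> u x - NMC N \<alpha> v x \<ge> 0) \<and> (\<forall>y. y \<notin> \<Omega> \<longrightarrow> u y \<ge> v y)
           \<longrightarrow> (\<forall>x0\<in>\<Omega>. (\<forall>y. u y - v y \<ge> u x0 - v x0) \<longrightarrow> (\<exists>c. \<forall>y. u y - v y = c)))"
proof -
  have Na: "2 \<le> real N + \<alpha>" using N \<alpha> by simp
  have "((\<lambda>\<epsilon>. LINT y : - ball x \<epsilon> | lborel.
           ((u x - v x) - (u y - v y)) / norm (x - y) powr (real N + \<alpha>) * qtilde N \<alpha> u v x y)
         \<longlongrightarrow> NMC N \<alpha> u x - NMC N \<alpha> v x) (at_right 0)" if "x \<in> \<Omega>" for x
    unfolding NMC_integrand_diff_eq[OF Na]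
    by (rule NMC_diff_truncations_tendsto[OF N dim \<alpha>(1) \<beta> \<Omega> that u v])
  moreover have "\<exists>c. \<forall>y. u y - v y = c"
    if "\<forall>x\<in>\<Omega>. NMC N \<alpha> u x - NMC N \<alpha> v x \<ge> 0" "x0 \<in> \<Omega>" "\<forall>y. u y - v y \<ge> u x0 - v x0" for x0
    using NMC_diff_nonneg_at_min_imp_const[OF N dim \<alpha>(1) \<beta> \<Omega> that(2) u v] that by blast
  ultimately show ?thesis by blast
qed

end
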